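(* Write $\cdot|_0$ for substitution $f_1'=0$. For every polynomial $\mathcal P$ in ten variables there exist polynomials $\mathcal P_0,\mathcal Q_0,\mathcal R_0,\mathcal S_0,\mathcal T_0,\mathcal U_0,\mathcal V_0$ in four variables such that, identically in the jet variables, $$\mathcal P(\Lambda^3|_0,\Lambda^5_1|_0,\Lambda^7_{1,1}|_0,M^8|_0,\Lambda^9_{1,1,1}|_0,M^{10}_1|_0,N^{12}|_0,K^{12}_{1,1}|_0,H^{14}_1|_0,F^{16}_{1,1}|_0)$$ $$=\mathcal P_0(\Lambda^3,\Lambda^5_1,M^8,N^{12})|_0+\Lambda^7_{1,1}\mathcal Q_0(\Lambda^5_1,\Lambda^7_{1,1},M^8,N^{12})|_0+\Lambda^9_{1,1,1}\mathcal R_0(\Lambda^7_{1,1},M^8,\Lambda^9_{1,1,1},N^{12})|_0+M^{10}_1\mathcal S_0(M^8,\Lambda^9_{1,1,1},M^{10}_1,N^{12})|_0$$ $$+K^{12}_{1,1}\mathcal T_0(\Lambda^9_{1,1,1},M^{10}_1,N^{12},K^{12}_{1,1})|_0+H^{14}_1\mathcal U_0(\Lambda^9_{1,1,1},N^{12},K^{12}_{1,1},H^{14}_1)|_0+F^{16}_{1,1}\mathcal V_0(\Lambda^9_{1,1,1},K^{12}_{1,1},H^{14}_1,F^{16}_{1,1})|_0 .$$ Moreover this representation is unique: if the right-hand side vanishes identically in $\mathbb C[f_2',f_1'',f_2'',\dots,f_1^{(5)},f_2^{(5)}]$, then $\mathcal P_0,\mathcal Q_0,\mathcal R_0,\mathcal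 S_0,\mathcal T_0,\mathcal U_0,\mathcal V_0$ are all identically zero.
   Context: $f_i^{(\lambda)}$ ($i\in\{1,2\}$, $\lambda\ge1$) are independent indeterminates; $D=\sum_{i,\lambda}f_i^{(\lambda+1)}\partial/\partial f_i^{(\lambda)}$; $\Delta^{\alpha,\beta}:=f_1^{(\alpha)}f_2^{(\beta)}-f_1^{(\beta)}f_2^{(\alpha)}$; for $P,Q$ of weights $m,n$, $[P,Q]:=n\,DP\cdot Q-m\,P\cdot DQ$ (superscripts below are weights, $f_1'$ has weight 1). $\Lambda^3:=\Delta^{1,2}$; $\Lambda^5_1:=\Delta^{1,3}f_1'-3\Delta^{1,2}f_1''$; $\Lambda^7_{1,1}:=(\Delta^{1,4}+4\Delta^{2,3})(f_1')^2-10\Delta^{1,3}f_1'f_1''+15\Delta^{1,2}(f_1'')^2$; $M^8:=3\Delta^{1,4}\Delta^{1,2}+12\Delta^{2,3}\Delta^{1,2}-5(\Delta^{1,3})^2$; $\Lambda^9_{1,1,1}:=[\Lambda^7_{1,1},f_1']$; $M^{10}_1:=[M^8,f_1']$; $N^{12}:=[M^8,\Lambda^3]$; $K^{12}_{1,1}:=[\Lambda^7_{1,1},\Lambda^5_1]/f_1'$ (this bracket is divisible by $f_1'$); $H^{14}_1:=[M^8,\Lambda^5_1]$; $F^{16}_{1,1}:=[M^8,\Lambda^7_{1,1}]$. *)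

theory Defs
  imports Complex_Main "HOL-Library.Poly_Mapping"
begin

type_synonym 'v mpoly = "('v \<Rightarrow>\<^sub>0 nat) \<Rightarrow>\<^sub>0 complex"

text \<open>Jet variables: (i, l) stands for f_i^(l) (only i in {1,2}, l \<ge> 1 are used).\<close>
type_synonym jpoly = "(nat \<times> nat) mpoly"

definition mvars :: "'v mpoly \<Rightarrow> 'v set" where
  "mvars p = \<Union> (Poly_Mapping.keys ` Poly_Mapping.keys p)"

definition Var :: "'v \<Rightarrow> 'v mpoly" where
  "Var v = Poly_Mapping.single (Poly_Mapping.single v 1) 1"

definition mconst :: "complex \<Rightarrow> 'v mpoly" where
  "mconst c = Poly_Mapping.single 0 c"

definition pdiff :: "'v \<Rightarrow> 'v mpoly \<Rightarrow> 'v mpoly" where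
  "pdiff v p = (\<Sum>m\<in>Poly_Mapping.keys p.
      Poly_Mapping.single (m - Poly_Mapping.single v 1)
        (Poly_Mapping.lookup p m * of_nat (Poly_Mapping.lookup m v)))"

definition ins :: "('v \<Rightarrow> jpoly) \<Rightarrow> 'v mpoly \<Rightarrow> jpoly" where
  "ins \<sigma> p = (\<Sum>m\<in>Poly_Mapping.keys p.
      mconst (Poly_Mapping.lookup p m) * (\<Prod>v\<in>Poly_Mapping.keys m. \<sigma> v ^ Poly_Mapping.lookup m v))"

definition Dj :: "jpoly \<Rightarrow> jpoly" where
  "Dj p = (\<Sum>v\<in>mvars p. pdiff v p * Var (fst v, Suc (snd v)))"

definition fj :: "nat \<Rightarrow> nat \<Rightarrow> jpoly" where
  "fj i l = Var (i, l)"

definition Delta :: "nat \<Rightarrow> nat \<Rightarrow> jpoly" where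
  "Delta a b = fj 1 a * fj 2 b - fj 1 b * fj 2 a"

text \<open>Bracket [P,Q] := n DP Q - m P DQ for P, Q of weights m, n.\<close>
definition brk :: "nat \<Rightarrow> nat \<Rightarrow> jpoly \<Rightarrow> jpoly \<Rightarrow> jpoly" where
  "brk m n P Q = of_nat n * Dj P * Q - of_nat m * P * Dj Q"

definition Lam3 :: jpoly where "Lam3 = Delta 1 2"
definition Lam5 :: jpoly where "Lam5 = Delta 1 3 * fj 1 1 - 3 * Delta 1 2 * fj 1 2"
definition Lam7 :: jpoly where
  "Lam7 = (Delta 1 4 + 4 * Delta 2 3) * (fj 1 1)^2 - 10 * Delta 1 3 * fj 1 1 * fj 1 2
          + 15 * Delta 1 2 * (fj 1 2)^2"
definition M8 :: jpoly where
  "M8 = 3 * Delta 1 4 * Delta 1 2 + 12 * Delta 2 3 * Delta 1 2 - 5 * (Delta 1 3)^2"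
definition Lam9 :: jpoly where "Lam9 = brk 7 1 Lam7 (fj 1 1)"
definition M10 :: jpoly where "M10 = brk 8 1 M8 (fj 1 1)"
definition N12 :: jpoly where "N12 = brk 8 3 M8 Lam3"
text \<open>K^12 = [Lam7, Lam5] / f_1' (the bracket is divisible by f_1').\<close>
definition K12 :: jpoly where "K12 = (THE q. brk 7 5 Lam7 Lam5 = fj 1 1 * q)"
definition H14 :: jpoly where "H14 = brk 8 5 M8 Lam5"
definition F16 :: jpoly where "F16 = brk 8 7 M8 Lam7"

definition subst0 :: "jpoly \<Rightarrow> jpoly" where
  "subst0 p = ins (\<lambda>v. if v = (1, 1) then 0 else Var v) p"

end

theory Submission
  imports Defs "HOL-Library.Product_Lexorder"
begin

(* At f1' = 0 every one of the ten invariants becomes a constant times a monomial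
   f1''^b * L^a * M^m * N^n in the four reduced quantities f1'', L = Lambda3|0, M = M8|0 and
   N = N12|0, and its exponent vector (b, a, m, n) satisfies b <= 3a + 2m + 2n ("admissible").
   Conversely the admissible vectors split, according to the size of b, into seven consecutive
   ranges, and the terms of the k-th summand of the theorem (prefix times a monomial in its four
   invariants) reduce to exactly the vectors of the k-th range, each one once.
   Existence: each term of P reduces to an admissible monomial, which is a single term of one
   family.  Uniqueness: setting all jets except f1'', f2', f1^(4), f1^(5) to zero turns every
   reduced monomial into a single term whose exponent determines (b, a, m, n); so distinct
   family terms stay distinct, their coefficients are nonzero, and a vanishing sum forces every
   coefficient polynomial to vanish. *)

abbreviation lookup where "lookup \<equiv> Poly_Mapping.lookup"
abbreviation keys where "keys \<equiv> Poly_Mapping.keys"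
abbreviation single where "single \<equiv> Poly_Mapping.single"

lemma poly_mapping_sum_terms:
  "(p::('a \<Rightarrow>\<^sub>0 'b::comm_monoid_add)) = (\<Sum>k\<in>keys p. single k (lookup p k))"
  by (rule poly_mapping_eqI) (auto simp: lookup_sum lookup_single when_def in_keys_iff)

lemma poly_mapping_induct [case_names zero add single]:
  fixes p :: "'a \<Rightarrow>\<^sub>0 'b::comm_monoid_add"
  assumes "P 0" "\<And>p q. P p \<Longrightarrow> P q \<Longrightarrow> P (p + q)" "\<And>k c. P (single k c)"
  shows "P p"
proof -
  have "P (\<Sum>k\<in>S. single k (f k))" if "finite S" for S f
    using that by (induction S rule: finite_induct) (auto simp: assms)
  then show ?thesis
    by (subst poly_mapping_sum_terms) simp
qed

lemma mconst_0 [simp]: "mconst 0 = 0" by (simp add: mconst_def)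
lemma mconst_1 [simp]: "mconst 1 = 1" by (simp add: mconst_def)
lemma mconst_numeral [simp]: "mconst (numeral n) = numeral n" by (simp add: mconst_def)
lemma mconst_add: "mconst (a + b) = mconst a + mconst b" by (simp add: mconst_def single_add)
lemma mconst_mult: "mconst (a * b) = mconst a * mconst b" by (simp add: mconst_def mult_single)
lemma mconst_uminus: "mconst (- a) = - mconst a" by (simp add: mconst_def single_uminus)
lemma mconst_power: "mconst (a ^ n) = mconst a ^ n"
  by (induction n) (simp_all add: mconst_mult)

lemma mvars_zero [simp]: "mvars 0 = {}"
  by (simp add: mvars_def)

lemma finite_mvars [simp]: "finite (mvars p)"
  by (simp add: mvars_def)

lemma mvars_add: "mvars (p + q) \<subseteq> mvars p \<union> mvars q"
  using keys_add[of p q] by (auto simp: mvars_def)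

lemma mvars_mult: "mvars (p * q) \<subseteq> mvars p \<union> mvars q"
proof
  fix x assume "x \<in> mvars (p * q)"
  then obtain m where m: "m \<in> keys (p * q)" "x \<in> keys m" by (auto simp: mvars_def)
  then obtain a b where ab: "m = a + b" "a \<in> keys p" "b \<in> keys q"
    using keys_mult[of p q] by blast
  then have "x \<in> keys a \<union> keys b" using m(2) keys_add[of a b] by blast
  then show "x \<in> mvars p \<union> mvars q" using ab by (auto simp: mvars_def)
qed

lemma keys_subset_mvars: "e \<in> keys P \<Longrightarrow> keys e \<subseteq> mvars P"
  by (auto simp: mvars_def)

lemma sum_single_eq_zero:
  assumes "finite A" "inj_on E A" "(\<Sum>x\<in>A. single (E x) (C x)) = 0" "x \<in> A"
  shows "C x = (0 :: 'b :: comm_monoid_add)"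
proof -
  have "(\<Sum>y\<in>A. C y when E y = E x) = (\<Sum>y\<in>A. if y = x then C y else 0)"
    using assms(2,4) by (intro sum.cong) (auto simp: when_def inj_on_eq_iff)
  also have "\<dots> = C x"
    using assms(1,4) by simp
  finally show ?thesis
    using arg_cong[OF assms(3), of "\<lambda>p. lookup p (E x)"] by (simp add: lookup_sum lookup_single)
qed

lemma exp_eqI:
  fixes e e' :: "nat \<Rightarrow>\<^sub>0 nat"
  assumes "keys e \<subseteq> {..<4}" "keys e' \<subseteq> {..<4}"
    "lookup e 0 = lookup e' 0" "lookup e 1 = lookup e' 1"
    "lookup e 2 = lookup e' 2" "lookup e 3 = lookup e' 3"
  shows "e = e'"
proof (rule poly_mapping_eqI)
  fix i
  show "lookup e i = lookup e' i"
  proof (cases "i < 4")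
    case True
    then have "i \<in> {0, 1, 2, 3}" by auto
    then show ?thesis using assms(3-6) by auto
  next
    case False
    then have "i \<notin> keys e" "i \<notin> keys e'" using assms(1,2) by auto
    then show ?thesis by (simp add: in_keys_iff)
  qed
qed

definition eval_monom :: "('v \<Rightarrow> jpoly) \<Rightarrow> ('v \<Rightarrow>\<^sub>0 nat) \<Rightarrow> jpoly" where
  "eval_monom \<sigma> e = (\<Prod>v\<in>keys e. \<sigma> v ^ lookup e v)"

lemma eval_monom_superset:
  "finite S \<Longrightarrow> keys e \<subseteq> S \<Longrightarrow> eval_monom \<sigma> e = (\<Prod>v\<in>S. \<sigma> v ^ lookup e v)"
  unfolding eval_monom_def by (rule prod.mono_neutral_left) (auto simp: in_keys_iff)

lemma eval_monom_add: "eval_monom \<sigma> (e + f) = eval_monom \<sigma> e * eval_monom \<sigma> f"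
proof -
  let ?S = "keys e \<union> keys f"
  have "eval_monom \<sigma> (e + f) = (\<Prod>v\<in>?S. \<sigma> v ^ lookup e v * \<sigma> v ^ lookup f v)"
    using keys_add[of e f]
    by (subst eval_monom_superset[of ?S]) (auto simp: lookup_add power_add)
  also have "\<dots> = eval_monom \<sigma> e * eval_monom \<sigma> f"
    using eval_monom_superset[of ?S e \<sigma>] eval_monom_superset[of ?S f \<sigma>]
    by (simp add: prod.distrib)
  finally show ?thesis .
qed

lemma ins_superset:
  "finite S \<Longrightarrow> keys p \<subseteq> S \<Longrightarrow> ins \<sigma> p = (\<Sum>m\<in>S. mconst (lookup p m) * eval_monom \<sigma> m)"
  unfolding ins_def eval_monom_def by (rule sum.mono_neutral_left) (auto simp: in_keys_iff)

lemma ins_zero [simp]: "ins \<sigma> 0 = 0"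
  by (simp add: ins_def)

lemma ins_single: "ins \<sigma> (single e c) = mconst c * eval_monom \<sigma> e"
  by (cases "c = 0") (simp_all add: ins_def eval_monom_def)

lemma ins_add: "ins \<sigma> (p + q) = ins \<sigma> p + ins \<sigma> q"
proof -
  let ?S = "keys p \<union> keys q"
  have "ins \<sigma> (p + q) = (\<Sum>m\<in>?S. mconst (lookup p m) * eval_monom \<sigma> m
                                 + mconst (lookup q m) * eval_monom \<sigma> m)"
    using keys_add[of p q]
    by (subst ins_superset[of ?S]) (auto simp: lookup_add mconst_add distrib_right)
  also have "\<dots> = ins \<sigma> p + ins \<sigma> q"
    using ins_superset[of ?S p \<sigma>] ins_superset[of ?S q \<sigma>] by (simp add: sum.distrib)
  finally show ?thesis .
qed

lemma ins_mult: "ins \<sigma> (p * q) = ins \<sigma> p * ins \<sigma> q"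
proof (induction p rule: poly_mapping_induct)
  case (single k c)
  show ?case
  proof (induction q rule: poly_mapping_induct)
    case (add q1 q2)
    then show ?case by (simp add: distrib_left ins_add)
  qed (simp_all add: mult_single ins_single eval_monom_add mconst_mult mult_ac)
qed (simp_all add: distrib_right ins_add)

lemma ins_uminus: "ins \<sigma> (- p) = - ins \<sigma> p"
  using ins_add[of \<sigma> "- p" p] by (simp add: eq_neg_iff_add_eq_0)

lemma ins_diff: "ins \<sigma> (p - q) = ins \<sigma> p - ins \<sigma> q"
  using ins_add[of \<sigma> p "- q"] by (simp add: ins_uminus)

lemma ins_mconst [simp]: "ins \<sigma> (mconst c) = mconst c"
  by (simp add: mconst_def ins_single eval_monom_def)

lemma ins_one [simp]: "ins \<sigma> 1 = 1"
  using ins_mconst[of \<sigma> 1] by simp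

lemma ins_numeral [simp]: "ins \<sigma> (numeral n) = numeral n"
  using ins_mconst[of \<sigma> "numeral n"] by simp

lemma ins_Var [simp]: "ins \<sigma> (Var v) = \<sigma> v"
  by (simp add: Var_def ins_single eval_monom_def)

lemma ins_power: "ins \<sigma> (p ^ n) = ins \<sigma> p ^ n"
  by (induction n) (simp_all add: ins_mult)

lemma ins_prod: "ins \<sigma> (\<Prod>v\<in>S. f v) = (\<Prod>v\<in>S. ins \<sigma> (f v))"
  by (induction S rule: infinite_finite_induct) (simp_all add: ins_mult)

lemma ins_sum: "ins \<sigma> (\<Sum>k\<in>S. f k) = (\<Sum>k\<in>S. ins \<sigma> (f k))"
  by (induction S rule: infinite_finite_induct) (simp_all add: ins_add)

lemmas ins_ring_hom = ins_add ins_mult ins_diff ins_uminus ins_power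

lemma ins_ins: "ins \<tau> (ins \<sigma> P) = ins (\<lambda>v. ins \<tau> (\<sigma> v)) P"
  by (induction P rule: poly_mapping_induct)
     (simp_all add: ins_add ins_single ins_mult eval_monom_def ins_prod ins_power)

lemma pdiff_superset:
  "finite S \<Longrightarrow> keys p \<subseteq> S \<Longrightarrow>
   pdiff v p = (\<Sum>m\<in>S. single (m - single v 1) (lookup p m * of_nat (lookup m v)))"
  unfolding pdiff_def by (rule sum.mono_neutral_left) (auto simp: in_keys_iff)

lemma pdiff_zero [simp]: "pdiff v 0 = 0"
  by (simp add: pdiff_def)

lemma pdiff_single: "pdiff v (single e c) = single (e - single v 1) (c * of_nat (lookup e v))"
  by (cases "c = 0") (simp_all add: pdiff_def)

lemma pdiff_add: "pdiff v (p + q) = pdiff v p + pdiff v q"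
proof -
  let ?S = "keys p \<union> keys q"
  have "pdiff v (p + q) = (\<Sum>m\<in>?S. single (m - single v 1) (lookup p m * of_nat (lookup m v))
                                   + single (m - single v 1) (lookup q m * of_nat (lookup m v)))"
    using keys_add[of p q]
    by (subst pdiff_superset[of ?S]) (auto simp: lookup_add distrib_right single_add)
  also have "\<dots> = pdiff v p + pdiff v q"
    using pdiff_superset[of ?S p v] pdiff_superset[of ?S q v] by (simp add: sum.distrib)
  finally show ?thesis .
qed

lemma single_shift:
  "single (k - single v 1 + k') (a * of_nat (lookup k v))
   = single (k + k' - single v 1) (a * (of_nat (lookup k v) :: complex))"
proof (cases "lookup k v = 0")
  case False
  then have "k - single v 1 + k' = k + k' - single v 1"
    by (intro poly_mapping_eqI) (auto simp: lookup_add lookup_minus lookup_single when_def)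
  then show ?thesis by simp
qed simp

lemma pdiff_mult_single:
  "pdiff v (single k c * single k' c')
   = pdiff v (single k c) * single k' c' + single k c * pdiff v (single k' c')"
proof -
  have "pdiff v (single k c * single k' c')
        = single (k + k' - single v 1) (c * c' * of_nat (lookup k v))
        + single (k' + k - single v 1) (c * c' * of_nat (lookup k' v))"
    by (simp add: mult_single pdiff_single lookup_add algebra_simps add.commute[of k'] flip: single_add)
  also have "\<dots> = single (k - single v 1 + k') (c * c' * of_nat (lookup k v))
                 + single (k' - single v 1 + k) (c * c' * of_nat (lookup k' v))"
    by (simp only: single_shift)
  also have "\<dots> = pdiff v (single k c) * single k' c' + single k c * pdiff v (single k' c')"
    by (simp add: mult_single pdiff_single ac_simps)
  finally show ?thesis .
qed

lemma pdiff_mult: "pdiff v (p * q) = pdiff v p * q + p * pdiff v q"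
proof (induction p rule: poly_mapping_induct)
  case (single k c)
  show ?case
  proof (induction q rule: poly_mapping_induct)
    case (add q1 q2)
    then show ?case by (simp add: distrib_left pdiff_add)
  qed (simp_all add: pdiff_mult_single)
qed (simp_all add: distrib_right pdiff_add)

lemma pdiff_notin: "v \<notin> mvars p \<Longrightarrow> pdiff v p = 0"
  unfolding pdiff_def mvars_def by (auto intro!: sum.neutral simp: in_keys_iff)

lemma Dj_superset:
  "finite S \<Longrightarrow> mvars p \<subseteq> S \<Longrightarrow> Dj p = (\<Sum>v\<in>S. pdiff v p * Var (fst v, Suc (snd v)))"
  unfolding Dj_def by (rule sum.mono_neutral_left) (auto simp: pdiff_notin)

lemma Dj_add: "Dj (p + q) = Dj p + Dj q"
  using mvars_add[of p q]
  by (subst (1 2 3) Dj_superset[where S = "mvars p \<union> mvars q"])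
     (auto simp: pdiff_add distrib_right sum.distrib)

lemma Dj_mult: "Dj (p * q) = Dj p * q + p * Dj q"
  using mvars_mult[of p q]
  by (subst (1 2 3) Dj_superset[where S = "mvars p \<union> mvars q"])
     (auto simp: pdiff_mult algebra_simps sum.distrib sum_distrib_left sum_distrib_right)

lemma Dj_uminus: "Dj (- p) = - Dj p"
  using Dj_add[of "- p" p] by (simp add: Dj_def eq_neg_iff_add_eq_0)

lemma Dj_diff: "Dj (p - q) = Dj p - Dj q"
  using Dj_add[of p "- q"] by (simp add: Dj_uminus)

lemma Dj_mconst: "Dj (mconst c) = 0"
  by (simp add: Dj_def mvars_def mconst_def)

lemma Dj_numeral [simp]: "Dj (numeral n) = 0"
  using Dj_mconst[of "numeral n"] by simp

lemma Dj_fj: "Dj (fj i l) = fj i (Suc l)"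
proof -
  have "mvars (Var (i, l)) = {(i, l)}" and "pdiff (i, l) (Var (i, l)) = 1"
    by (simp_all add: mvars_def Var_def pdiff_single)
  then show ?thesis
    by (simp add: Dj_def fj_def)
qed

lemma Dj_power2: "Dj (p ^ 2) = 2 * p * Dj p"
  by (simp add: power2_eq_square Dj_mult)

lemmas Dj_rules = Dj_add Dj_mult Dj_diff Dj_uminus Dj_power2

text \<open>Ordering the jet variables lexicographically makes \<open>jpoly\<close> an integral domain
  (via the instances of Poly_Mapping); in particular variables cancel.\<close>

lemma Var_nonzero: "(Var v :: jpoly) \<noteq> 0"
  by (simp add: Var_def flip: keys_eq_empty)

section \<open>The invariants at \<open>f\<^sub>1' = 0\<close>\<close>

lemma subst0_add [simp]: "subst0 (p + q) = subst0 p + subst0 q"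
  by (simp add: subst0_def ins_add)
lemma subst0_mult [simp]: "subst0 (p * q) = subst0 p * subst0 q"
  by (simp add: subst0_def ins_mult)
lemma subst0_diff [simp]: "subst0 (p - q) = subst0 p - subst0 q"
  by (simp add: subst0_def ins_diff)
lemma subst0_uminus [simp]: "subst0 (- p) = - subst0 p"
  by (simp add: subst0_def ins_uminus)
lemma subst0_power [simp]: "subst0 (p ^ n) = subst0 p ^ n"
  by (simp add: subst0_def ins_power)
lemma subst0_numeral [simp]: "subst0 (numeral n) = numeral n"
  by (simp add: subst0_def)
lemma subst0_mconst [simp]: "subst0 (mconst c) = mconst c"
  by (simp add: subst0_def)
lemma subst0_zero [simp]: "subst0 0 = 0"
  by (simp add: subst0_def)
lemma subst0_one [simp]: "subst0 1 = 1"
  by (simp add: subst0_def)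
lemma subst0_fj [simp]: "subst0 (fj i l) = (if i = 1 \<and> l = 1 then 0 else fj i l)"
  by (auto simp: subst0_def fj_def)

text \<open>The total derivative on the jet variables, in simp normal form (where the order \<open>1\<close>
  appears as \<open>Suc 0\<close>).\<close>

lemma Dj_fj_numeral [simp]:
  "Dj (fj i (Suc 0)) = fj i 2" "Dj (fj i 2) = fj i 3" "Dj (fj i 3) = fj i 4"
  "Dj (fj i 4) = fj i 5" "Dj (fj i 5) = fj i 6"
  by (simp_all add: Dj_fj numeral_eq_Suc)

text \<open>The bracket defining \<open>K12\<close> is divisible by \<open>f\<^sub>1'\<close>; the quotient below was found by
  computer algebra and the division is checked by ring normalisation.\<close>

definition K12_quotient :: jpoly where
  "K12_quotient = 65*(fj 1 1)*(fj 1 2)*(fj 1 3)*(fj 1 4)*(fj 2 1)^2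
    + 110*(fj 1 1)*(fj 1 2)*(fj 1 3)^2*(fj 2 1)*(fj 2 2)
    - 60*(fj 1 1)*(fj 1 2)^2*(fj 1 3)*(fj 2 1)*(fj 2 3)
    - 60*(fj 1 1)*(fj 1 2)^2*(fj 1 3)*(fj 2 2)^2
    - 90*(fj 1 1)*(fj 1 2)^2*(fj 1 4)*(fj 2 1)*(fj 2 2)
    - 15*(fj 1 1)*(fj 1 2)^2*(fj 1 5)*(fj 2 1)^2 + 60*(fj 1 1)*(fj 1 2)^3*(fj 2 1)*(fj 2 4)
    + 60*(fj 1 1)*(fj 1 2)^3*(fj 2 2)*(fj 2 3) - 50*(fj 1 1)*(fj 1 3)^3*(fj 2 1)^2
    - 90*(fj 1 1)^2*(fj 1 2)*(fj 1 3)*(fj 2 1)*(fj 2 4)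
    + 114*(fj 1 1)^2*(fj 1 2)*(fj 1 3)*(fj 2 2)*(fj 2 3)
    - 9*(fj 1 1)^2*(fj 1 2)*(fj 1 4)*(fj 2 1)*(fj 2 3)
    + 75*(fj 1 1)^2*(fj 1 2)*(fj 1 4)*(fj 2 2)^2
    + 15*(fj 1 1)^2*(fj 1 2)*(fj 1 5)*(fj 2 1)*(fj 2 2)
    + 15*(fj 1 1)^2*(fj 1 2)^2*(fj 2 1)*(fj 2 5)
    - 60*(fj 1 1)^2*(fj 1 2)^2*(fj 2 2)*(fj 2 4) - 27*(fj 1 1)^2*(fj 1 2)^2*(fj 2 3)^2
    - 31*(fj 1 1)^2*(fj 1 3)*(fj 1 4)*(fj 2 1)*(fj 2 2)
    + 5*(fj 1 1)^2*(fj 1 3)*(fj 1 5)*(fj 2 1)^2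
    + 100*(fj 1 1)^2*(fj 1 3)^2*(fj 2 1)*(fj 2 3) - 112*(fj 1 1)^2*(fj 1 3)^2*(fj 2 2)^2
    - 7*(fj 1 1)^2*(fj 1 4)^2*(fj 2 1)^2 - 15*(fj 1 1)^3*(fj 1 2)*(fj 2 2)*(fj 2 5)
    + 34*(fj 1 1)^3*(fj 1 2)*(fj 2 3)*(fj 2 4) - 5*(fj 1 1)^3*(fj 1 3)*(fj 2 1)*(fj 2 5)
    + 56*(fj 1 1)^3*(fj 1 3)*(fj 2 2)*(fj 2 4) - 50*(fj 1 1)^3*(fj 1 3)*(fj 2 3)^2
    + 14*(fj 1 1)^3*(fj 1 4)*(fj 2 1)*(fj 2 4) - 25*(fj 1 1)^3*(fj 1 4)*(fj 2 2)*(fj 2 3)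
    - 5*(fj 1 1)^3*(fj 1 5)*(fj 2 1)*(fj 2 3) + 5*(fj 1 1)^4*(fj 2 3)*(fj 2 5)
    - 7*(fj 1 1)^4*(fj 2 4)^2 - 25*(fj 1 2)^2*(fj 1 3)^2*(fj 2 1)^2
    + 60*(fj 1 2)^3*(fj 1 3)*(fj 2 1)*(fj 2 2) + 15*(fj 1 2)^3*(fj 1 4)*(fj 2 1)^2
    - 60*(fj 1 2)^4*(fj 2 1)*(fj 2 3)"

lemma brk_Lam7_Lam5: "brk 7 5 Lam7 Lam5 = fj 1 1 * K12_quotient"
  unfolding brk_def Lam7_def Lam5_def Delta_def K12_quotient_def
  by (simp add: Dj_rules) algebra

lemma K12_eq: "K12 = K12_quotient"
  unfolding K12_def
proof (rule the_equality)
  show "brk 7 5 Lam7 Lam5 = fj 1 1 * K12_quotient"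
    by (rule brk_Lam7_Lam5)
  show "q = K12_quotient" if "brk 7 5 Lam7 Lam5 = fj 1 1 * q" for q
    using that brk_Lam7_Lam5 Var_nonzero by (simp add: fj_def)
qed

text \<open>At \<open>f\<^sub>1' = 0\<close> each of the ten invariants becomes a constant multiple of a monomial in
  \<open>f\<^sub>1''\<close>, \<open>\<Lambda>\<^sup>3|\<^sub>0\<close>, \<open>M\<^sup>8|\<^sub>0\<close> and \<open>N\<^sup>12|\<^sub>0\<close>.\<close>

type_synonym expvec = "nat \<times> nat \<times> nat \<times> nat"

definition rmonom :: "complex \<Rightarrow> expvec \<Rightarrow> jpoly" where
  "rmonom c t = (case t of (\<beta>, a, \<mu>, \<nu>) \<Rightarrow>
     mconst c * fj 1 2 ^ \<beta> * subst0 Lam3 ^ a * subst0 M8 ^ \<mu> * subst0 N12 ^ \<nu>)"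

lemma rmonom_mult:
  "rmonom c (\<beta>, a, \<mu>, \<nu>) * rmonom d (\<beta>', a', \<mu>', \<nu>')
   = rmonom (c * d) (\<beta> + \<beta>', a + a', \<mu> + \<mu>', \<nu> + \<nu>')"
  by (simp add: rmonom_def mconst_mult power_add mult_ac)

lemma rmonom_power:
  "rmonom c (\<beta>, a, \<mu>, \<nu>) ^ n = rmonom (c ^ n) (n * \<beta>, n * a, n * \<mu>, n * \<nu>)"
  by (simp add: rmonom_def mconst_power power_mult_distrib power_mult mult.commute[of n])

lemma rmonom_one: "rmonom 1 (0, 0, 0, 0) = 1"
  by (simp add: rmonom_def)

lemma mconst_mult_rmonom: "mconst c * rmonom d t = rmonom (c * d) t"
  by (simp add: rmonom_def mconst_mult mult_ac split: prod.split)

lemma subst0_Lam3: "subst0 Lam3 = - (fj 1 2 * fj 2 1)"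
  by (simp add: Lam3_def Delta_def)

lemma nf_Lam3: "subst0 Lam3 = rmonom 1 (0, 1, 0, 0)"
  by (simp add: rmonom_def)

lemma nf_Lam5: "subst0 Lam5 = rmonom (-3) (1, 1, 0, 0)"
  by (simp add: rmonom_def subst0_Lam3 mconst_uminus Lam5_def Delta_def)

lemma nf_Lam7: "subst0 Lam7 = rmonom 15 (2, 1, 0, 0)"
  by (simp add: rmonom_def subst0_Lam3 Lam7_def Delta_def power2_eq_square)

lemma nf_M8: "subst0 M8 = rmonom 1 (0, 0, 1, 0)"
  by (simp add: rmonom_def)

lemma nf_Lam9: "subst0 Lam9 = rmonom (-105) (3, 1, 0, 0)"
proof -
  have "subst0 Lam9 = - 7 * subst0 Lam7 * fj 1 2"
    by (simp add: Lam9_def brk_def)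
  then show ?thesis
    by (simp add: nf_Lam7 rmonom_def subst0_Lam3 mconst_uminus power3_eq_cube power2_eq_square)
qed

lemma nf_M10: "subst0 M10 = rmonom (-8) (1, 0, 1, 0)"
  by (simp add: M10_def brk_def rmonom_def mconst_uminus algebra_simps)

lemma nf_N12: "subst0 N12 = rmonom 1 (0, 0, 0, 1)"
  by (simp add: rmonom_def)

lemma nf_K12: "subst0 K12 = rmonom 5 (2, 0, 1, 0)"
  unfolding K12_eq K12_quotient_def rmonom_def M8_def Delta_def by simp algebra

lemma nf_H14: "subst0 H14 = rmonom (-5) (1, 0, 0, 1)"
  unfolding H14_def N12_def rmonom_def brk_def Lam5_def Lam3_def Delta_def
  by (simp add: Dj_rules mconst_uminus) algebra

lemma nf_F16: "subst0 F16 = rmonom 35 (2, 0, 0, 1)"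
  unfolding F16_def N12_def rmonom_def brk_def Lam7_def Lam3_def Delta_def
  by (simp add: Dj_rules) algebra

section \<open>The seven families\<close>

text \<open>Family \<open>k\<close> consists of the products of the prefix \<open>fam_pre ! k\<close> with a polynomial in
  the four invariants \<open>fam_gens ! k\<close>; these are the seven summands of the theorem.\<close>

definition fam_pre :: "jpoly list" where
  "fam_pre = [1, Lam7, Lam9, M10, K12, H14, F16]"

definition fam_gens :: "jpoly list list" where
  "fam_gens = [[Lam3, Lam5, M8, N12], [Lam5, Lam7, M8, N12], [Lam7, M8, Lam9, N12],
     [M8, Lam9, M10, N12], [Lam9, M10, N12, K12], [Lam9, N12, K12, H14], [Lam9, K12, H14, F16]]"

definition fam_term :: "nat \<Rightarrow> nat mpoly \<Rightarrow> jpoly" where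
  "fam_term k Q = subst0 (fam_pre ! k * ins (\<lambda>i. fam_gens ! k ! i) Q)"

text \<open>Exponent vector and coefficient of the reduced monomial obtained from the prefix of family
  \<open>k\<close> times the monomial with exponents \<open>a\<^sub>0, \<dots>, a\<^sub>3\<close> in its four invariants; they are read off
  from the normal forms of the invariants.\<close>

definition fam_exp :: "nat \<Rightarrow> nat \<Rightarrow> nat \<Rightarrow> nat \<Rightarrow> nat \<Rightarrow> expvec" where
  "fam_exp k a0 a1 a2 a3 =
     [(a1, a0 + a1, a2, a3),
      (2 + a0 + 2 * a1, 1 + a0 + a1, a2, a3),
      (3 + 2 * a0 + 3 * a2, 1 + a0 + a2, a1, a3),
      (1 + 3 * a1 + a2, a1, 1 + a0 + a2, a3),
      (2 + 3 * a0 + a1 + 2 * a3, a0, 1 + a1 + a3, a2),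
      (1 + 3 * a0 + 2 * a2 + a3, a0, a2, 1 + a1 + a3),
      (2 + 3 * a0 + 2 * a1 + a2 + 2 * a3, a0, a1, 1 + a2 + a3)] ! k"

definition fam_coef :: "nat \<Rightarrow> nat \<Rightarrow> nat \<Rightarrow> nat \<Rightarrow> nat \<Rightarrow> complex" where
  "fam_coef k a0 a1 a2 a3 =
     [(-3) ^ a1,
      15 * (-3) ^ a0 * 15 ^ a1,
      -105 * 15 ^ a0 * (-105) ^ a2,
      -8 * (-105) ^ a1 * (-8) ^ a2,
      5 * (-105) ^ a0 * (-8) ^ a1 * 5 ^ a3,
      -5 * (-105) ^ a0 * 5 ^ a2 * (-5) ^ a3,
      35 * (-105) ^ a0 * 5 ^ a1 * (-5) ^ a2 * 35 ^ a3] ! k"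

definition fam_exp_of :: "nat \<Rightarrow> (nat \<Rightarrow>\<^sub>0 nat) \<Rightarrow> expvec" where
  "fam_exp_of k e = fam_exp k (lookup e 0) (lookup e 1) (lookup e 2) (lookup e 3)"

definition fam_coef_of :: "nat \<Rightarrow> (nat \<Rightarrow>\<^sub>0 nat) \<Rightarrow> complex" where
  "fam_coef_of k e = fam_coef k (lookup e 0) (lookup e 1) (lookup e 2) (lookup e 3)"

lemma less_7_cases: "(k::nat) < 7 \<Longrightarrow> k \<in> {0, 1, 2, 3, 4, 5, 6}"
  by auto

lemma fam_coef_nonzero: "k < 7 \<Longrightarrow> fam_coef k a0 a1 a2 a3 \<noteq> 0"
  by (drule less_7_cases) (auto simp: fam_coef_def)

lemma fam_coef_of_nonzero: "k < 7 \<Longrightarrow> fam_coef_of k e \<noteq> 0"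
  by (simp add: fam_coef_of_def fam_coef_nonzero)

lemma fam_monom:
  assumes "k < 7"
  shows "subst0 (fam_pre ! k * ((fam_gens ! k ! 0) ^ a0 * (fam_gens ! k ! 1) ^ a1
                                 * (fam_gens ! k ! 2) ^ a2 * (fam_gens ! k ! 3) ^ a3))
         = rmonom (fam_coef k a0 a1 a2 a3) (fam_exp k a0 a1 a2 a3)"
  using less_7_cases[OF assms]
  by (auto simp: fam_pre_def fam_gens_def fam_coef_def fam_exp_def rmonom_one
      nf_Lam3 nf_Lam5 nf_Lam7 nf_M8 nf_Lam9 nf_M10 nf_N12 nf_K12 nf_H14 nf_F16
      rmonom_mult rmonom_power algebra_simps)

section \<open>The families parametrise the admissible exponent vectors\<close>

text \<open>An exponent vector is admissible if the power of \<open>f\<^sub>1''\<close> is at most \<open>3a + 2\<mu> + 2\<nu>\<close>; this is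
  the inequality satisfied by every invariant at \<open>f\<^sub>1' = 0\<close>.  The admissible range of \<open>\<beta>\<close> splits
  into seven consecutive intervals, one for each family; inside its interval a family hits every
  vector exactly once.\<close>

definition admissible :: "expvec \<Rightarrow> bool" where
  "admissible t = (case t of (\<beta>, a, \<mu>, \<nu>) \<Rightarrow> \<beta> \<le> 3 * a + 2 * \<mu> + 2 * \<nu>)"

lemma fam_exp_surj:
  assumes "admissible (\<beta>, a, \<mu>, \<nu>)"
  shows "\<exists>k<7. \<exists>a0 a1 a2 a3. fam_exp k a0 a1 a2 a3 = (\<beta>, a, \<mu>, \<nu>)"
proof -
  have hit: "\<exists>k<7. \<exists>a0 a1 a2 a3. fam_exp k a0 a1 a2 a3 = (\<beta>, a, \<mu>, \<nu>)"
    if "k < 7" "fam_exp k a0 a1 a2 a3 = (\<beta>, a, \<mu>, \<nu>)" for k a0 a1 a2 a3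
    using that by blast
  consider "\<beta> \<le> a" | "a < \<beta>" "\<beta> \<le> 2 * a" | "2 * a < \<beta>" "\<beta> \<le> 3 * a"
    | "3 * a < \<beta>" "\<beta> \<le> 3 * a + \<mu>" | "3 * a + \<mu> < \<beta>" "\<beta> \<le> 3 * a + 2 * \<mu>"
    | "3 * a + 2 * \<mu> < \<beta>" "\<beta> \<le> 3 * a + 2 * \<mu> + \<nu>"
    | "3 * a + 2 * \<mu> + \<nu> < \<beta>" "\<beta> \<le> 3 * a + 2 * \<mu> + 2 * \<nu>"
    using assms by (force simp: admissible_def)
  then show ?thesis
  proof cases
    case 1
    then show ?thesis by (intro hit[of 0 "a - \<beta>" \<beta> \<mu> \<nu>]) (auto simp: fam_exp_def)
  next
    case 2
    then show ?thesis by (intro hit[of 1 "2 * a - \<beta>" "\<beta> - a - 1" \<mu> \<nu>]) (auto simp: fam_exp_def)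
  next
    case 3
    then show ?thesis by (intro hit[of 2 "3 * a - \<beta>" \<mu> "\<beta> - 2 * a - 1" \<nu>]) (auto simp: fam_exp_def)
  next
    case 4
    then show ?thesis
      by (intro hit[of 3 "\<mu> + 3 * a - \<beta>" a "\<beta> - 3 * a - 1" \<nu>]) (auto simp: fam_exp_def)
  next
    case 5
    then show ?thesis
      by (intro hit[of 4 a "2 * \<mu> + 3 * a - \<beta>" \<nu> "\<beta> - 3 * a - \<mu> - 1"]) (auto simp: fam_exp_def)
  next
    case 6
    then show ?thesis
      by (intro hit[of 5 a "\<nu> + 3 * a + 2 * \<mu> - \<beta>" \<mu> "\<beta> - 3 * a - 2 * \<mu> - 1"])
         (auto simp: fam_exp_def)
  next
    case 7
    then show ?thesis
      by (intro hit[of 6 a \<mu> "2 * \<nu> + 3 * a + 2 * \<mu> - \<beta>" "\<beta> - 3 * a - 2 * \<mu> - \<nu> - 1"])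
         (auto simp: fam_exp_def)
  qed
qed

lemma fam_exp_inj:
  assumes "k < 7" "k' < 7" "fam_exp k a0 a1 a2 a3 = fam_exp k' b0 b1 b2 b3"
  shows "k = k' \<and> a0 = b0 \<and> a1 = b1 \<and> a2 = b2 \<and> a3 = b3"
  using less_7_cases[OF assms(1)] less_7_cases[OF assms(2)] assms(3)
  by (auto simp: fam_exp_def)

lemma fam_exp_of_inj:
  assumes "k < 7" "k' < 7" "keys e \<subseteq> {..<4}" "keys e' \<subseteq> {..<4}"
    and "fam_exp_of k e = fam_exp_of k' e'"
  shows "k = k' \<and> e = e'"
  using fam_exp_inj[OF assms(1,2) assms(5)[unfolded fam_exp_of_def]] exp_eqI[OF assms(3,4)]
  by auto

section \<open>Existence of the representation\<close>

lemma ins_single_4: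
  fixes e :: "nat \<Rightarrow>\<^sub>0 nat"
  assumes "keys e \<subseteq> {..<4}"
  shows "ins \<sigma> (single e c)
         = mconst c * (\<sigma> 0 ^ lookup e 0 * \<sigma> 1 ^ lookup e 1 * \<sigma> 2 ^ lookup e 2 * \<sigma> 3 ^ lookup e 3)"
proof -
  have keys: "keys e \<subseteq> {0, 1, 2, 3}"
    using assms by auto
  have "eval_monom \<sigma> e = (\<Prod>v\<in>{0, 1, 2, 3}. \<sigma> v ^ lookup e v)"
    using eval_monom_superset[OF _ keys] by simp
  then show ?thesis
    by (simp add: ins_single mult.assoc)
qed

lemma fam_term_single:
  assumes "k < 7" "keys e \<subseteq> {..<4}"
  shows "fam_term k (single e c) = rmonom (c * fam_coef_of k e) (fam_exp_of k e)"
  using fam_monom[OF assms(1)]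
  by (simp add: fam_term_def ins_single_4[OF assms(2)] mconst_mult_rmonom mult.left_commute
      fam_coef_of_def fam_exp_of_def)

lemma fam_term_add: "fam_term k (P + Q) = fam_term k P + fam_term k Q"
  by (simp add: fam_term_def ins_add distrib_left)

lemma fam_term_zero [simp]: "fam_term k 0 = 0"
  by (simp add: fam_term_def)

definition fam_sum :: "(nat \<Rightarrow> nat mpoly) \<Rightarrow> jpoly" where
  "fam_sum Q = (\<Sum>k<7. fam_term k (Q k))"

definition representable :: "jpoly \<Rightarrow> bool" where
  "representable X \<longleftrightarrow> (\<exists>Q. (\<forall>k<7. mvars (Q k) \<subseteq> {..<4}) \<and> X = fam_sum Q)"

lemma representable_zero: "representable 0"
  unfolding representable_def fam_sum_def by (rule exI[of _ "\<lambda>_. 0"]) simp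

lemma representable_add:
  assumes "representable X" "representable Y"
  shows "representable (X + Y)"
proof -
  obtain Q R where Q: "\<forall>k<7. mvars (Q k) \<subseteq> {..<4}" "X = fam_sum Q"
    and R: "\<forall>k<7. mvars (R k) \<subseteq> {..<4}" "Y = fam_sum R"
    using assms by (auto simp: representable_def)
  have "mvars (Q k + R k) \<subseteq> {..<4}" if "k < 7" for k
    using mvars_add[of "Q k" "R k"] Q(1) R(1) that by blast
  moreover have "X + Y = fam_sum (\<lambda>k. Q k + R k)"
    by (simp add: Q(2) R(2) fam_sum_def fam_term_add sum.distrib)
  ultimately show ?thesis
    unfolding representable_def by (intro exI[of _ "\<lambda>k. Q k + R k"]) blast
qed

lemma representable_fam_term:
  assumes "k < 7" "mvars P \<subseteq> {..<4}"
  shows "representable (fam_term k P)"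
proof -
  have "fam_sum (\<lambda>j. if j = k then P else 0) = (\<Sum>j<7. if j = k then fam_term k P else 0)"
    unfolding fam_sum_def by (rule sum.cong) auto
  also have "\<dots> = fam_term k P"
    using assms(1) by simp
  finally have "fam_sum (\<lambda>j. if j = k then P else 0) = fam_term k P" .
  then show ?thesis
    unfolding representable_def using assms(2)
    by (intro exI[of _ "\<lambda>j. if j = k then P else 0"]) auto
qed

lemma representable_rmonom:
  assumes "admissible t"
  shows "representable (rmonom c t)"
proof -
  obtain \<beta> a \<mu> \<nu> where t: "t = (\<beta>, a, \<mu>, \<nu>)"
    by (cases t) auto
  then obtain k a0 a1 a2 a3 where k: "k < 7" and exp: "fam_exp k a0 a1 a2 a3 = t"
    using fam_exp_surj assms by blast
  define e :: "nat \<Rightarrow>\<^sub>0 nat" where "e = single 0 a0 + single 1 a1 + single 2 a2 + single 3 a3"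
  have keys_e: "keys e \<subseteq> {..<4}"
    by (auto simp: e_def in_keys_iff lookup_add lookup_single when_def split: if_splits)
  have lookups: "lookup e 0 = a0" "lookup e (Suc 0) = a1" "lookup e 2 = a2" "lookup e 3 = a3"
    by (simp_all add: e_def lookup_add lookup_single)
  define d where "d = fam_coef k a0 a1 a2 a3"
  have "d \<noteq> 0"
    using fam_coef_nonzero[OF k] by (simp add: d_def)
  then have "rmonom c t = fam_term k (single e (c / d))"
    by (simp add: fam_term_single[OF k keys_e] fam_coef_of_def fam_exp_of_def lookups exp
        flip: d_def)
  moreover have "mvars (single e (c / d)) \<subseteq> {..<4}"
    using keys_e by (simp add: mvars_def)
  ultimately show ?thesis
    by (simp add: representable_fam_term[OF k])
qed

text \<open>Reduced monomials with admissible exponent vector.  They are closed under products, and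
  every invariant is one of them, so every monomial in the invariants reduces to one.\<close>

definition adm_rmonom :: "jpoly \<Rightarrow> bool" where
  "adm_rmonom X \<longleftrightarrow> (\<exists>c t. admissible t \<and> X = rmonom c t)"

lemma adm_rmonomI: "admissible t \<Longrightarrow> adm_rmonom (rmonom c t)"
  unfolding adm_rmonom_def by blast

lemma adm_rmonom_mult:
  assumes "adm_rmonom X" "adm_rmonom Y"
  shows "adm_rmonom (X * Y)"
proof -
  obtain c \<beta> a \<mu> \<nu> d \<beta>' a' \<mu>' \<nu>' where
    "X = rmonom c (\<beta>, a, \<mu>, \<nu>)" "admissible (\<beta>, a, \<mu>, \<nu>)"
    "Y = rmonom d (\<beta>', a', \<mu>', \<nu>')" "admissible (\<beta>', a', \<mu>', \<nu>')"
    using assms unfolding adm_rmonom_def by (metis prod_cases4)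
  then show ?thesis
    by (auto simp: rmonom_mult admissible_def intro!: adm_rmonomI)
qed

lemma adm_rmonom_one: "adm_rmonom 1"
  using adm_rmonomI[of "(0, 0, 0, 0)" 1] by (simp add: rmonom_one admissible_def)

lemma adm_rmonom_power: "adm_rmonom X \<Longrightarrow> adm_rmonom (X ^ n)"
  by (induction n) (simp_all add: adm_rmonom_one adm_rmonom_mult)

lemma adm_rmonom_prod: "(\<And>v. v \<in> S \<Longrightarrow> adm_rmonom (f v)) \<Longrightarrow> adm_rmonom (\<Prod>v\<in>S. f v)"
  by (induction S rule: infinite_finite_induct) (simp_all add: adm_rmonom_one adm_rmonom_mult)

lemma adm_rmonom_mconst: "adm_rmonom X \<Longrightarrow> adm_rmonom (mconst c * X)"
  unfolding adm_rmonom_def by (metis mconst_mult_rmonom)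

lemma adm_rmonom_invariant:
  assumes "i < 10"
  shows "adm_rmonom (subst0 ([Lam3, Lam5, Lam7, M8, Lam9, M10, N12, K12, H14, F16] ! i))"
proof -
  have "i \<in> {0, 1, 2, 3, 4, 5, 6, 7, 8, 9}"
    using assms by auto
  then show ?thesis
    by (auto simp: nf_Lam3 nf_Lam5 nf_Lam7 nf_M8 nf_Lam9 nf_M10 nf_N12 nf_K12 nf_H14 nf_F16
        admissible_def intro!: adm_rmonomI)
qed

lemma representable_adm_rmonom: "adm_rmonom X \<Longrightarrow> representable X"
  unfolding adm_rmonom_def by (metis representable_rmonom)

lemma representable_sum:
  "(\<And>x. x \<in> S \<Longrightarrow> representable (f x)) \<Longrightarrow> representable (\<Sum>x\<in>S. f x)"
  by (induction S rule: infinite_finite_induct) (simp_all add: representable_zero representable_add)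

lemma representable_invariants:
  assumes "mvars P \<subseteq> {..<10}"
  shows "representable (ins (\<lambda>i. subst0 ([Lam3, Lam5, Lam7, M8, Lam9, M10, N12, K12, H14, F16] ! i)) P)"
    (is "representable (ins ?\<sigma> P)")
proof -
  have "adm_rmonom (ins ?\<sigma> (single e (lookup P e)))" if "e \<in> keys P" for e
  proof -
    have "keys e \<subseteq> {..<10}"
      using keys_subset_mvars[OF that] assms by blast
    then show ?thesis
      unfolding ins_single eval_monom_def
      by (intro adm_rmonom_mconst adm_rmonom_prod adm_rmonom_power adm_rmonom_invariant) auto
  qed
  then have "representable (\<Sum>e\<in>keys P. ins ?\<sigma> (single e (lookup P e)))"
    by (intro representable_sum representable_adm_rmonom)
  moreover have "ins ?\<sigma> P = (\<Sum>e\<in>keys P. ins ?\<sigma> (single e (lookup P e)))"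
    by (subst (1) poly_mapping_sum_terms[of P]) (simp add: ins_sum)
  ultimately show ?thesis
    by simp
qed

section \<open>Uniqueness of the representation\<close>

text \<open>To separate the reduced monomials we further set every jet variable other than
  \<open>f\<^sub>1''\<close>, \<open>f\<^sub>2'\<close>, \<open>f\<^sub>1\<^sup>(\<^sup>4\<^sup>)\<close>, \<open>f\<^sub>1\<^sup>(\<^sup>5\<^sup>)\<close> to zero.  Then \<open>\<Lambda>\<^sup>3|\<^sub>0\<close>, \<open>M\<^sup>8|\<^sub>0\<close>, \<open>N\<^sup>12|\<^sub>0\<close> become single terms and
  a reduced monomial becomes a single term whose exponents determine its exponent vector.\<close>

definition spec :: "nat \<times> nat \<Rightarrow> jpoly" where
  "spec v = (if v \<in> {(1, 2), (2, 1), (1, 4), (1, 5)} then Var v else 0)"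

lemma spec_subst0: "ins spec (subst0 p) = ins spec p"
proof -
  have "(\<lambda>v. ins spec (if v = (1, 1) then 0 else Var v)) = spec"
    by (auto simp: spec_def)
  then show ?thesis
    by (simp add: subst0_def ins_ins)
qed

definition yexp :: "nat \<Rightarrow> nat \<Rightarrow> nat \<Rightarrow> nat \<Rightarrow> (nat \<times> nat) \<Rightarrow>\<^sub>0 nat" where
  "yexp a b c d = single (1, 2) a + single (2, 1) b + single (1, 4) c + single (1, 5) d"

lemma yexp_inj:
  assumes "yexp a b c d = yexp a' b' c' d'"
  shows "a = a' \<and> b = b' \<and> c = c' \<and> d = d'"
proof -
  have "lookup (yexp a b c d) v = lookup (yexp a' b' c' d') v" for v
    using assms by simp
  from this[of "(1, 2)"] this[of "(2, 1)"] this[of "(1, 4)"] this[of "(1, 5)"] show ?thesis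
    by (simp add: yexp_def lookup_add lookup_single)
qed

lemma yexp_term_mult:
  "single (yexp a b c d) x * single (yexp a' b' c' d') y
   = single (yexp (a + a') (b + b') (c + c') (d + d')) (x * y :: complex)"
  by (simp add: mult_single yexp_def single_add ac_simps)

lemma yexp_term_power:
  "single (yexp a b c d) x ^ n = single (yexp (n * a) (n * b) (n * c) (n * d)) (x ^ n :: complex)"
  by (induction n) (simp_all add: yexp_term_mult, simp add: yexp_def)

lemma yexp_term_const: "(mconst x :: jpoly) = single (yexp 0 0 0 0) x"
  by (simp add: mconst_def yexp_def)

lemma yexp_Var:
  "Var (1, 2) = single (yexp 1 0 0 0) 1" "Var (2, 1) = single (yexp 0 1 0 0) 1"
  "Var (1, 4) = single (yexp 0 0 1 0) 1" "Var (1, 5) = single (yexp 0 0 0 1) 1"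
  by (simp_all add: Var_def yexp_def)

text \<open>The simplifier normally rewrites the numeral \<open>1 :: nat\<close> to \<open>Suc 0\<close>; this is switched off
  below wherever \<open>yexp_Var\<close> has to match the kept variables literally.\<close>

lemma ins_fj: "ins \<sigma> (fj i l) = \<sigma> (i, l)"
  by (simp add: fj_def)

lemma spec_fj12: "ins spec (fj 1 2) = single (yexp 1 0 0 0) 1"
proof -
  have "ins spec (fj 1 2) = Var (1, 2)"
    by (simp add: ins_fj spec_def)
  then show ?thesis
    by (simp add: yexp_Var del: One_nat_def)
qed

lemma spec_Lam3: "ins spec (subst0 Lam3) = single (yexp 1 1 0 0) (-1)"
proof -
  have "ins spec (subst0 Lam3) = mconst (-1) * (Var (1, 2) * Var (2, 1))"
    by (simp add: spec_subst0 Lam3_def Delta_def ins_ring_hom ins_fj spec_def mconst_uminus)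
  then show ?thesis
    by (simp add: yexp_term_const yexp_Var yexp_term_mult del: mconst_uminus One_nat_def)
qed

lemma spec_M8: "ins spec (subst0 M8) = single (yexp 1 2 1 0) 3"
proof -
  have "ins spec (subst0 M8) = mconst 3 * (Var (1, 2) * (Var (2, 1) * Var (2, 1)) * Var (1, 4))"
    by (simp add: spec_subst0 M8_def Delta_def ins_ring_hom ins_fj spec_def)
  then show ?thesis
    by (simp add: yexp_term_const yexp_Var yexp_term_mult del: mconst_numeral One_nat_def)
      (simp add: numeral_2_eq_2)
qed

lemma spec_N12: "ins spec (subst0 N12) = single (yexp 2 3 0 1) (-9)"
proof -
  have "ins spec (subst0 N12)
        = mconst (-9) * (Var (1, 2) * Var (1, 2) * (Var (2, 1) * Var (2, 1) * Var (2, 1)) * Var (1, 5))"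
    by (simp add: spec_subst0 N12_def brk_def M8_def Lam3_def Delta_def Dj_rules ins_ring_hom
        ins_fj spec_def mconst_uminus)
  then show ?thesis
    by (simp add: yexp_term_const yexp_Var yexp_term_mult del: mconst_uminus mconst_numeral One_nat_def)
      (simp add: numeral_2_eq_2)
qed

definition spec_exp :: "expvec \<Rightarrow> (nat \<times> nat) \<Rightarrow>\<^sub>0 nat" where
  "spec_exp t = (case t of (\<beta>, a, \<mu>, \<nu>) \<Rightarrow> yexp (\<beta> + a + \<mu> + 2 * \<nu>) (a + 2 * \<mu> + 3 * \<nu>) \<mu> \<nu>)"

definition spec_coef :: "expvec \<Rightarrow> complex" where
  "spec_coef t = (case t of (\<beta>, a, \<mu>, \<nu>) \<Rightarrow> (-1) ^ a * 3 ^ \<mu> * (-9) ^ \<nu>)"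

lemma spec_rmonom: "ins spec (rmonom c t) = single (spec_exp t) (c * spec_coef t)"
proof (cases t)
  case (fields \<beta> a \<mu> \<nu>)
  then show ?thesis
    by (simp add: rmonom_def ins_ring_hom spec_fj12 spec_Lam3 spec_M8 spec_N12
        yexp_term_power spec_exp_def spec_coef_def del: One_nat_def)
       (simp add: yexp_term_const yexp_term_mult algebra_simps)
qed

lemma spec_exp_inj: "spec_exp t = spec_exp t' \<Longrightarrow> t = t'"
  by (cases t; cases t') (auto simp: spec_exp_def dest!: yexp_inj)

lemma spec_coef_nonzero: "spec_coef t \<noteq> 0"
  by (cases t) (simp add: spec_coef_def)

lemma fam_term_sum: "fam_term k (\<Sum>x\<in>S. f x) = (\<Sum>x\<in>S. fam_term k (f x))"
  by (induction S rule: infinite_finite_induct) (simp_all add: fam_term_add)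

lemma spec_fam_term:
  assumes "k < 7" "mvars Q \<subseteq> {..<4}"
  shows "ins spec (fam_term k Q) = (\<Sum>e\<in>keys Q.
           single (spec_exp (fam_exp_of k e)) (lookup Q e * fam_coef_of k e * spec_coef (fam_exp_of k e)))"
proof -
  have "fam_term k Q = (\<Sum>e\<in>keys Q. fam_term k (single e (lookup Q e)))"
    by (subst (1) poly_mapping_sum_terms[of Q]) (simp add: fam_term_sum)
  also have "ins spec \<dots> = (\<Sum>e\<in>keys Q.
           single (spec_exp (fam_exp_of k e)) (lookup Q e * fam_coef_of k e * spec_coef (fam_exp_of k e)))"
    unfolding ins_sum
  proof (rule sum.cong)
    fix e assume "e \<in> keys Q"
    then have "keys e \<subseteq> {..<4}"
      using keys_subset_mvars assms(2) by blast
    then show "ins spec (fam_term k (single e (lookup Q e)))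
        = single (spec_exp (fam_exp_of k e)) (lookup Q e * fam_coef_of k e * spec_coef (fam_exp_of k e))"
      by (simp add: fam_term_single[OF assms(1)] spec_rmonom mult.assoc)
  qed simp
  finally show ?thesis .
qed

text \<open>Uniqueness: after specialisation, the terms of all seven families have pairwise distinct
  exponents and nonzero coefficients.\<close>

lemma fam_sum_eq_zero:
  assumes mv: "\<forall>k<7. mvars (Q k) \<subseteq> {..<4}" and zero: "fam_sum Q = 0" and k: "k < 7"
  shows "Q k = 0"
proof -
  define A where "A = Sigma {..<7} (\<lambda>k. keys (Q k))"
  define E where "E = (\<lambda>(k, e). spec_exp (fam_exp_of k e))"
  define C where "C = (\<lambda>(k, e). lookup (Q k) e * fam_coef_of k e * spec_coef (fam_exp_of k e))"
  have "(\<Sum>p\<in>A. single (E p) (C p)) = ins spec (fam_sum Q)"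
    using mv by (simp add: fam_sum_def ins_sum spec_fam_term A_def E_def C_def sum.Sigma split_def)
  then have sum0: "(\<Sum>p\<in>A. single (E p) (C p)) = 0"
    by (simp add: zero)
  have "inj_on E A"
  proof (rule inj_onI)
    fix p p' assume p: "p \<in> A" "p' \<in> A" and eq: "E p = E p'"
    obtain k e k' e' where pp: "p = (k, e)" "p' = (k', e')"
      by (cases p, cases p')
    have ke: "k < 7" "e \<in> keys (Q k)" "k' < 7" "e' \<in> keys (Q k')"
      using p pp by (auto simp: A_def)
    have "keys e \<subseteq> {..<4}" "keys e' \<subseteq> {..<4}"
      using keys_subset_mvars[OF ke(2)] keys_subset_mvars[OF ke(4)] mv ke(1,3) by blast+
    moreover have "fam_exp_of k e = fam_exp_of k' e'"
      using eq pp by (simp add: E_def spec_exp_inj)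
    ultimately show "p = p'"
      using fam_exp_of_inj[OF ke(1,3)] pp by blast
  qed
  then have "C (k, e) = 0" if "e \<in> keys (Q k)" for e
    using sum_single_eq_zero[OF _ _ sum0] that k by (simp add: A_def)
  then have "lookup (Q k) e = 0" for e
    using fam_coef_of_nonzero[OF k] spec_coef_nonzero
    by (cases "e \<in> keys (Q k)") (auto simp: C_def in_keys_iff)
  then show ?thesis
    by (intro poly_mapping_eqI) simp
qed

lemma fam_sum_7: "fam_sum Q = fam_term 0 (Q 0) + fam_term 1 (Q 1) + fam_term 2 (Q 2)
  + fam_term 3 (Q 3) + fam_term 4 (Q 4) + fam_term 5 (Q 5) + fam_term 6 (Q 6)"
  by (simp add: fam_sum_def numeral_eq_Suc add.assoc)

lemma fam_term_nth:
  "fam_term 0 P = subst0 (ins (\<lambda>i. [Lam3, Lam5, M8, N12] ! i) P)"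
  "fam_term 1 P = subst0 (Lam7 * ins (\<lambda>i. [Lam5, Lam7, M8, N12] ! i) P)"
  "fam_term 2 P = subst0 (Lam9 * ins (\<lambda>i. [Lam7, M8, Lam9, N12] ! i) P)"
  "fam_term 3 P = subst0 (M10 * ins (\<lambda>i. [M8, Lam9, M10, N12] ! i) P)"
  "fam_term 4 P = subst0 (K12 * ins (\<lambda>i. [Lam9, M10, N12, K12] ! i) P)"
  "fam_term 5 P = subst0 (H14 * ins (\<lambda>i. [Lam9, N12, K12, H14] ! i) P)"
  "fam_term 6 P = subst0 (F16 * ins (\<lambda>i. [Lam9, K12, H14, F16] ! i) P)"
  unfolding fam_term_def fam_pre_def fam_gens_def by simp_all

theorem mainTheorem12:
  "(\<forall>P :: nat mpoly. mvars P \<subseteq> {..<10} \<longrightarrow>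
     (\<exists>P0 Q0 R0 S0 T0 U0 V0 :: nat mpoly.
        mvars P0 \<subseteq> {..<4} \<and> mvars Q0 \<subseteq> {..<4} \<and> mvars R0 \<subseteq> {..<4} \<and>
        mvars S0 \<subseteq> {..<4} \<and> mvars T0 \<subseteq> {..<4} \<and> mvars U0 \<subseteq> {..<4} \<and>
        mvars V0 \<subseteq> {..<4} \<and>
        ins (\<lambda>i. subst0 ([Lam3, Lam5, Lam7, M8, Lam9, M10, N12, K12, H14, F16] ! i)) P
        = subst0 (ins (\<lambda>i. [Lam3, Lam5, M8, N12] ! i) P0)
          + subst0 (Lam7 * ins (\<lambda>i. [Lam5, Lam7, M8, N12] ! i) Q0)
          + subst0 (Lam9 * ins (\<lambda>i. [Lam7, M8, Lam9, N12] ! i) R0)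
          + subst0 (M10 * ins (\<lambda>i. [M8, Lam9, M10, N12] ! i) S0)
          + subst0 (K12 * ins (\<lambda>i. [Lam9, M10, N12, K12] ! i) T0)
          + subst0 (H14 * ins (\<lambda>i. [Lam9, N12, K12, H14] ! i) U0)
          + subst0 (F16 * ins (\<lambda>i. [Lam9, K12, H14, F16] ! i) V0)))
   \<and>
   (\<forall>P0 Q0 R0 S0 T0 U0 V0 :: nat mpoly.
        mvars P0 \<subseteq> {..<4} \<and> mvars Q0 \<subseteq> {..<4} \<and> mvars R0 \<subseteq> {..<4} \<and>
        mvars S0 \<subseteq> {..<4} \<and> mvars T0 \<subseteq> {..<4} \<and> mvars U0 \<subseteq> {..<4} \<and>
        mvars V0 \<subseteq> {..<4} \<longrightarrow>
        subst0 (ins (\<lambda>i. [Lam3, Lam5, M8, N12] ! i) P0)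
          + subst0 (Lam7 * ins (\<lambda>i. [Lam5, Lam7, M8, N12] ! i) Q0)
          + subst0 (Lam9 * ins (\<lambda>i. [Lam7, M8, Lam9, N12] ! i) R0)
          + subst0 (M10 * ins (\<lambda>i. [M8, Lam9, M10, N12] ! i) S0)
          + subst0 (K12 * ins (\<lambda>i. [Lam9, M10, N12, K12] ! i) T0)
          + subst0 (H14 * ins (\<lambda>i. [Lam9, N12, K12, H14] ! i) U0)
          + subst0 (F16 * ins (\<lambda>i. [Lam9, K12, H14, F16] ! i) V0) = 0
        \<longrightarrow> P0 = 0 \<and> Q0 = 0 \<and> R0 = 0 \<and> S0 = 0 \<and> T0 = 0 \<and> U0 = 0 \<and> V0 = 0)"
  (is "(\<forall>P. _ \<longrightarrow> ?repr P) \<and>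
       (\<forall>P0 Q0 R0 S0 T0 U0 V0. ?vars P0 Q0 R0 S0 T0 U0 V0 \<longrightarrow> ?rhs P0 Q0 R0 S0 T0 U0 V0 = 0 \<longrightarrow> _)")
proof (rule conjI; intro allI impI)
  fix P :: "nat mpoly"
  assume "mvars P \<subseteq> {..<10}"
  then obtain Q where vars: "\<forall>k<7. mvars (Q k) \<subseteq> {..<4}"
    and eq: "ins (\<lambda>i. subst0 ([Lam3, Lam5, Lam7, M8, Lam9, M10, N12, K12, H14, F16] ! i)) P = fam_sum Q"
    using representable_invariants unfolding representable_def by blast
  show "?repr P"
    unfolding eq fam_sum_7 fam_term_nth
    by (rule exI[of _ "Q 0"], rule exI[of _ "Q 1"], rule exI[of _ "Q 2"], rule exI[of _ "Q 3"],
        rule exI[of _ "Q 4"], rule exI[of _ "Q 5"], rule exI[of _ "Q 6"]) (simp add: vars)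
next
  fix P0 Q0 R0 S0 T0 U0 V0 :: "nat mpoly"
  assume vars: "?vars P0 Q0 R0 S0 T0 U0 V0" and rhs: "?rhs P0 Q0 R0 S0 T0 U0 V0 = 0"
  define Q where "Q = (\<lambda>k. [P0, Q0, R0, S0, T0, U0, V0] ! k)"
  have "fam_sum Q = ?rhs P0 Q0 R0 S0 T0 U0 V0"
    unfolding fam_sum_7 fam_term_nth Q_def by simp
  then have "fam_sum Q = 0"
    using rhs by (rule trans)
  moreover have "\<forall>k<7. mvars (Q k) \<subseteq> {..<4}"
    using vars by (auto simp: Q_def dest!: less_7_cases)
  ultimately have "Q k = 0" if "k < 7" for k
    using fam_sum_eq_zero that by blast
  from this[of 0] this[of 1] this[of 2] this[of 3] this[of 4] this[of 5] this[of 6]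
  show "P0 = 0 \<and> Q0 = 0 \<and> R0 = 0 \<and> S0 = 0 \<and> T0 = 0 \<and> U0 = 0 \<and> V0 = 0"
    by (simp add: Q_def)
qed

end
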